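(* Let $F$ be a factbase and $\mathcal R$ a set of existential rules. For each terminating $\mathbf{O}$-chase derivation (resp. $\mathbf{SO}$-chase derivation) from $F$ and $\mathcal R$, there exists a breadth-first terminating $\mathbf{O}$-chase derivation (resp. $\mathbf{SO}$-chase derivation) from $F$ and $\mathcal R$ of smaller or equal depth.
   Context: First-order setting with constants and variables, no function symbols; a factbase is a set of atoms; a homomorphism from $A$ to $B$ is a substitution $\pi$ with $\pi(A)\subseteq B$. An existential rule $R=(B,H)$ is $\forall\bar x\forall\bar y(B(\bar x,\bar y)\to\exists\bar z\,H(\bar x,\bar z))$; its frontier is $\bar x$. A trigger $(R,\pi)$ on $F$ has $\pi:B\to F$ a homomorphism; $\pi^s$ maps each existential variable $z$ to a fresh variable $z_{(R,\pi)}$; $F\cup\pi^s(H)$ is the immediate derivation. A derivation from $F$ and $\mathcal R$ is a (possibly infinite) sequence $D_0=(\emptyset,\emptyset,F)$, $D_i=(R_i,\pi_i,F_i)$, $F_i$ the immediate derivation from $F_{i-1}$ through $(R_i,\pi_i)$, triggers pairwise distinct. For a derivation with last factbase $F_n$, a trigger $(R,\pi)$ is $\mathbf{O}$-applicable if $\pi:B\to F_n$ is a homomorphism, and $\mathbf{SO}$-applicable if moreover no trigger $(R,\pi')$ already in the derivation has $\pi'$ equal to $\pi$ on the frontier of $R$. An $\mathbf{O}$-chase derivation is any derivation; an $\mathbf{SO}$-chase derivation is one where each trigger is $\mathbf{SO}$-applicable on its prefix. Rank: atoms of $F$ have rank 0; another atom $A$ has rank $1+\max_{A'\in\pi(B)}\mathrm{rank}(A')$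 for the first trigger $(R,\pi)$ with $A\in\pi^s(H)$; a trigger has rank $1+\max_{A'\in\pi(B)}\mathrm{rank}(A')$. Depth of a finite derivation: maximal rank of its atoms. A derivation is $\mathrm{X}$-breadth-first if (1) its triggers appear in non-decreasing rank, and (2) for each rank $k$ of a trigger, letting $D_i$ be the last element whose trigger has rank $k$, every trigger $\mathrm{X}$-applicable on $D_1,\dots,D_i$ has rank $k+1$. "Breadth-first $\mathrm{X}$-chase derivation" means $\mathrm{X}$-breadth-first $\mathrm{X}$-chase derivation. An $\mathrm{X}$-chase derivation is exhaustive if any trigger $\mathrm{X}$-applicable on $D_1,\dots,D_i$ is either applied at some later $D_k$ ($k\ge i$) or ceases to be $\mathrm{X}$-applicable on some $D_1,\dots,D_k$; terminating means exhaustive and finite. *)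

theory Defs
  imports Main
begin

datatype ('c,'v) rterm = RC 'c | RV 'v

type_synonym ('p,'c,'v) ratom = "'p \<times> ('c,'v) rterm list"

(* an existential rule (B,H): body and head *)
type_synonym ('p,'c,'v) rule = "('p,'c,'v) ratom set \<times> ('p,'c,'v) ratom set"

(* Terms of derived factbases: constants, original variables, and the fresh
   variables z_(R,pi) created by triggers (Null R z pi).  The substitution pi
   of a trigger is a partial map whose domain is the set of body variables. *)
datatype ('p,'c,'v) trm =
    Cst 'c
  | Var 'v
  | Null "('p,'c,'v) rule" 'v "'v \<Rightarrow> ('p,'c,'v) trm option"

type_synonym ('p,'c,'v) atom = "'p \<times> ('p,'c,'v) trm list"

type_synonym ('p,'c,'v) trigger =
  "('p,'c,'v) rule \<times> ('v \<Rightarrow> ('p,'c,'v) trm option)"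

datatype chase_variant = O | SO

definition rvars :: "('p,'c,'v) ratom set \<Rightarrow> 'v set" where
  "rvars A = {v. \<exists>a\<in>A. RV v \<in> set (snd a)}"

definition existential_rule :: "('p,'c,'v) rule \<Rightarrow> bool" where
  "existential_rule R \<longleftrightarrow> finite (fst R) \<and> finite (snd R)"

definition frontier :: "('p,'c,'v) rule \<Rightarrow> 'v set" where
  "frontier R = rvars (fst R) \<inter> rvars (snd R)"

fun emb_term :: "('c,'v) rterm \<Rightarrow> ('p,'c,'v) trm" where
  "emb_term (RC c) = Cst c"
| "emb_term (RV v) = Var v"

definition emb_atom :: "('p,'c,'v) ratom \<Rightarrow> ('p,'c,'v) atom" where
  "emb_atom a = (fst a, map emb_term (snd a))"

fun app_term :: "('v \<Rightarrow> ('p,'c,'v) trm) \<Rightarrow> ('c,'v) rterm \<Rightarrow> ('p,'c,'v) trm" where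
  "app_term \<sigma> (RC c) = Cst c"
| "app_term \<sigma> (RV v) = \<sigma> v"

definition app_atom :: "('v \<Rightarrow> ('p,'c,'v) trm) \<Rightarrow> ('p,'c,'v) ratom \<Rightarrow> ('p,'c,'v) atom" where
  "app_atom \<sigma> a = (fst a, map (app_term \<sigma>) (snd a))"

definition body_img :: "('p,'c,'v) trigger \<Rightarrow> ('p,'c,'v) atom set" where
  "body_img t = app_atom (\<lambda>v. the (snd t v)) ` fst (fst t)"

definition pi_s :: "('p,'c,'v) rule \<Rightarrow> ('v \<Rightarrow> ('p,'c,'v) trm option) \<Rightarrow> 'v \<Rightarrow> ('p,'c,'v) trm" where
  "pi_s R \<pi> v = (case \<pi> v of Some t \<Rightarrow> t | None \<Rightarrow> Null R v \<pi>)"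

definition trig_output :: "('p,'c,'v) trigger \<Rightarrow> ('p,'c,'v) atom set" where
  "trig_output t = app_atom (pi_s (fst t) (snd t)) ` snd (fst t)"

(* A (finite) derivation D_0, D_1, ..., D_n is represented by the list of its
   triggers [(R_1,pi_1), ..., (R_n,pi_n)];  the prefix D_0..D_i is  take i ds.
   fb F ds is the last factbase of the derivation ds. *)
definition fb :: "('p,'c,'v) ratom set \<Rightarrow> ('p,'c,'v) trigger list \<Rightarrow> ('p,'c,'v) atom set" where
  "fb F ds = emb_atom ` F \<union> (\<Union>t\<in>set ds. trig_output t)"

definition hom_trigger :: "('p,'c,'v) atom set \<Rightarrow> ('p,'c,'v) trigger \<Rightarrow> bool" where
  "hom_trigger G t \<longleftrightarrow> dom (snd t) = rvars (fst (fst t)) \<and> body_img t \<subseteq> G"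

definition applicable :: "chase_variant \<Rightarrow> ('p,'c,'v) ratom set \<Rightarrow> ('p,'c,'v) rule set
    \<Rightarrow> ('p,'c,'v) trigger list \<Rightarrow> ('p,'c,'v) trigger \<Rightarrow> bool" where
  "applicable X F Rs ds t \<longleftrightarrow>
     fst t \<in> Rs \<and> hom_trigger (fb F ds) t \<and> t \<notin> set ds \<and>
     (X = SO \<longrightarrow> \<not> (\<exists>\<pi>'. (fst t, \<pi>') \<in> set ds \<and> (\<forall>v\<in>frontier (fst t). \<pi>' v = snd t v)))"

definition chase_derivation :: "chase_variant \<Rightarrow> ('p,'c,'v) ratom set \<Rightarrow> ('p,'c,'v) rule set
    \<Rightarrow> ('p,'c,'v) trigger list \<Rightarrow> bool" where
  "chase_derivation X F Rs ds \<longleftrightarrow> (\<forall>i<length ds. applicable X F Rs (take i ds) (ds ! i))"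

primrec arank_r :: "('p,'c,'v) ratom set \<Rightarrow> ('p,'c,'v) trigger list \<Rightarrow> ('p,'c,'v) atom \<Rightarrow> nat" where
  "arank_r F [] = (\<lambda>A. 0)"
| "arank_r F (t # rds) = (\<lambda>A. if A \<in> fb F rds then arank_r F rds A
        else if A \<in> trig_output t then Suc (Max (insert 0 (arank_r F rds ` body_img t))) else 0)"

definition arank :: "('p,'c,'v) ratom set \<Rightarrow> ('p,'c,'v) trigger list \<Rightarrow> ('p,'c,'v) atom \<Rightarrow> nat" where
  "arank F ds = arank_r F (rev ds)"

definition trank :: "('p,'c,'v) ratom set \<Rightarrow> ('p,'c,'v) trigger list \<Rightarrow> ('p,'c,'v) trigger \<Rightarrow> nat" where
  "trank F ds t = Suc (Max (insert 0 (arank F ds ` body_img t)))"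

definition depth :: "('p,'c,'v) ratom set \<Rightarrow> ('p,'c,'v) trigger list \<Rightarrow> nat" where
  "depth F ds = Max (insert 0 (arank F ds ` fb F ds))"

definition breadth_first :: "chase_variant \<Rightarrow> ('p,'c,'v) ratom set \<Rightarrow> ('p,'c,'v) rule set
    \<Rightarrow> ('p,'c,'v) trigger list \<Rightarrow> bool" where
  "breadth_first X F Rs ds \<longleftrightarrow>
     (\<forall>i j. i \<le> j \<and> j < length ds \<longrightarrow>
        trank F (take i ds) (ds ! i) \<le> trank F (take j ds) (ds ! j)) \<and>
     (\<forall>i<length ds.
        (\<forall>j. i < j \<and> j < length ds \<longrightarrow> trank F (take j ds) (ds ! j) \<noteq> trank F (take i ds) (ds ! i))
        \<longrightarrow> (\<forall>t. applicable X F Rs (take (Suc i) ds) t \<longrightarrow>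
               trank F (take (Suc i) ds) t = Suc (trank F (take i ds) (ds ! i))))"

definition exhaustive :: "chase_variant \<Rightarrow> ('p,'c,'v) ratom set \<Rightarrow> ('p,'c,'v) rule set
    \<Rightarrow> ('p,'c,'v) trigger list \<Rightarrow> bool" where
  "exhaustive X F Rs ds \<longleftrightarrow>
     (\<forall>i\<le>length ds. \<forall>t. applicable X F Rs (take i ds) t \<longrightarrow>
        (\<exists>k. i \<le> k \<and> k < length ds \<and> ds ! k = t) \<or>
        (\<exists>k. i \<le> k \<and> k \<le> length ds \<and> \<not> applicable X F Rs (take k ds) t))"

(* terminating = exhaustive and finite; derivations are lists, hence finite *)
definition terminating :: "chase_variant \<Rightarrow> ('p,'c,'v) ratom set \<Rightarrow> ('p,'c,'v) rule set
    \<Rightarrow> ('p,'c,'v) trigger list \<Rightarrow> bool" where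
  "terminating X F Rs ds \<longleftrightarrow> chase_derivation X F Rs ds \<and> exhaustive X F Rs ds"

end

theory Submission
  imports Defs
begin

text \<open>The breadth-first derivation is built layer by layer: after a derivation \<open>Q\<close>, the next layer
  applies one representative of each X-equivalence class of triggers applicable on \<open>Q\<close>. Along
  the way the applied triggers are mapped injectively into the given terminating derivation \<open>ds\<close>,
  every null being renamed after the image of the trigger that created it. As \<open>ds\<close> is terminal,
  the renamed image of a trigger applicable on \<open>Q\<close> is equivalent to a trigger of \<open>ds\<close>, so the
  factbase of \<open>Q\<close> embeds into that of \<open>ds\<close>; hence at most \<open>length ds\<close> triggers are applied
  and the construction stops with a terminating breadth-first derivation \<open>B\<close>. Conversely, replaying
  \<open>ds\<close> from left to right, every atom of \<open>ds\<close> is the image of an atom of \<open>B\<close> of no greater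
  rank, because \<open>B\<close> contains, for every trigger of rank \<open>r\<close> on its factbase, an equivalent
  trigger of rank at most \<open>r\<close>. So the depth of \<open>B\<close> is at most that of \<open>ds\<close>.\<close>

section \<open>Ranks along a derivation\<close>

lemma fb_Nil: "fb F [] = emb_atom ` F"
  by (simp add: fb_def)

lemma fb_snoc: "fb F (P @ [t]) = fb F P \<union> trig_output t"
  by (auto simp: fb_def)

lemma fb_append_mono: "fb F P \<subseteq> fb F (P @ M)"
  by (auto simp: fb_def)

lemma fb_take_subset: "fb F (take i P) \<subseteq> fb F P"
  using fb_append_mono[of F "take i P" "drop i P"] by simp

lemma arank_Nil: "arank F [] A = 0"
  by (simp add: arank_def)

lemma arank_snoc:
  "arank F (P @ [t]) A =
     (if A \<in> fb F P then arank F P A else if A \<in> trig_output t then trank F P t else 0)"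
  by (simp add: arank_def trank_def fb_def)

lemma arank_append_stable: "A \<in> fb F P \<Longrightarrow> arank F (P @ M) A = arank F P A"
proof (induction M rule: rev_induct)
  case (snoc t M)
  then have "A \<in> fb F (P @ M)" using fb_append_mono by blast
  then show ?case using snoc arank_snoc[of F "P @ M"] by simp
qed simp

lemma trank_append_stable: "body_img t \<subseteq> fb F P \<Longrightarrow> trank F (P @ M) t = trank F P t"
  unfolding trank_def by (metis (no_types, lifting) arank_append_stable image_cong subsetD)

lemma finite_body_img: "finite (fst (fst t)) \<Longrightarrow> finite (body_img t)"
  by (simp add: body_img_def)

lemma trank_le_Suc_iff:
  "finite (fst (fst t)) \<Longrightarrow> trank F P t \<le> Suc k \<longleftrightarrow> (\<forall>b\<in>body_img t. arank F P b \<le> k)"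
  using finite_body_img[of t] by (simp add: trank_def)

lemma arank_less_trank:
  "finite (fst (fst t)) \<Longrightarrow> b \<in> body_img t \<Longrightarrow> arank F P b < trank F P t"
  using finite_body_img[of t] by (simp add: trank_def less_Suc_eq_le)

lemma trank_eq_Suc:
  assumes fin: "finite (fst (fst t))" and le: "\<forall>b\<in>body_img t. arank F P b \<le> k"
    and reached: "k = 0 \<or> (\<exists>b\<in>body_img t. k \<le> arank F P b)"
  shows "trank F P t = Suc k"
proof (rule antisym)
  show "trank F P t \<le> Suc k"
    using trank_le_Suc_iff[OF fin] le by blast
  show "Suc k \<le> trank F P t"
  proof (cases "k = 0")
    case False
    then obtain b where "b \<in> body_img t" "k \<le> arank F P b"
      using reached by blast
    then show ?thesis
      using arank_less_trank[OF fin, of b F P] by simp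
  qed (simp add: trank_def)
qed

lemma trank_le_trank:
  assumes "finite (fst (fst t'))" "finite (fst (fst t))"
    and "\<And>a'. a' \<in> body_img t' \<Longrightarrow> \<exists>b\<in>body_img t. arank F Q a' \<le> arank F P b"
  shows "trank F Q t' \<le> trank F P t"
  unfolding trank_def[of F P t] trank_le_Suc_iff[OF assms(1)]
proof
  fix a' assume "a' \<in> body_img t'"
  then obtain b where "b \<in> body_img t" "arank F Q a' \<le> arank F P b"
    using assms(3) by blast
  moreover have "arank F P b \<le> Max (insert 0 (arank F P ` body_img t))"
    using finite_body_img[OF assms(2)] \<open>b \<in> body_img t\<close> by (intro Max_ge) auto
  ultimately show "arank F Q a' \<le> Max (insert 0 (arank F P ` body_img t))"
    by linarith
qed

definition rank_at :: "('p,'c,'v) ratom set \<Rightarrow> ('p,'c,'v) trigger list \<Rightarrow> nat \<Rightarrow> nat" where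
  "rank_at F P j = trank F (take j P) (P ! j)"

lemma rank_at_append: "j < length P \<Longrightarrow> rank_at F (P @ M) j = rank_at F P j"
  by (simp add: rank_at_def nth_append)

lemma rank_at_append_length:
  "m < length M \<Longrightarrow> rank_at F (P @ M) (length P + m) = trank F (P @ take m M) (M ! m)"
  by (simp add: rank_at_def nth_append)

lemma rank_at_take: "i < j \<Longrightarrow> rank_at F (take j P) i = rank_at F P i"
  by (simp add: rank_at_def min_def)

lemma arank_eq_0_or_rank_at: "arank F P A = 0 \<or> (\<exists>j<length P. arank F P A = rank_at F P j)"
proof (induction P rule: rev_induct)
  case (snoc t P)
  have "rank_at F (P @ [t]) (length P) = trank F P t"
    by (simp add: rank_at_def)
  then show ?case
    using snoc rank_at_append[of _ P F "[t]"] arank_snoc[of F P t A]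
    by (auto split: if_splits) (metis less_SucI)
qed (simp add: arank_Nil)

lemma finite_arank_image: "finite (arank F P ` S)"
proof (rule finite_subset)
  show "arank F P ` S \<subseteq> insert 0 (rank_at F P ` {..<length P})"
    using arank_eq_0_or_rank_at[of F P] by auto
qed simp

definition ranks_sorted :: "('p,'c,'v) ratom set \<Rightarrow> ('p,'c,'v) trigger list \<Rightarrow> bool" where
  "ranks_sorted F P \<longleftrightarrow> (\<forall>i j. i \<le> j \<and> j < length P \<longrightarrow> rank_at F P i \<le> rank_at F P j)"

lemma ranks_sorted_le_last:
  assumes "ranks_sorted F P" "j < length P"
  shows "rank_at F P j \<le> rank_at F P (length P - 1)"
proof -
  have "j \<le> length P - 1" "length P - 1 < length P"
    using assms(2) by auto
  then show ?thesis
    using assms(1) unfolding ranks_sorted_def by blast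
qed

lemma ranks_sorted_append_layer:
  assumes "ranks_sorted F Q" "\<And>j. j < length Q \<Longrightarrow> rank_at F Q j \<le> k"
    and "\<And>m. m < length L \<Longrightarrow> rank_at F (Q @ L) (length Q + m) = Suc k"
  shows "ranks_sorted F (Q @ L)"
proof -
  have new: "rank_at F (Q @ L) j = Suc k" if "length Q \<le> j" "j < length (Q @ L)" for j
    using assms(3)[of "j - length Q"] that by simp
  show ?thesis
    unfolding ranks_sorted_def
  proof (intro allI impI; elim conjE)
    fix i j assume "i \<le> j" "j < length (Q @ L)"
    then show "rank_at F (Q @ L) i \<le> rank_at F (Q @ L) j"
      using assms(1,2) new rank_at_append[of _ Q F L]
      by (cases "j < length Q"; cases "i < length Q") (auto simp: ranks_sorted_def intro: le_SucI)
  qed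
qed

lemma arank_output_le_rank_at:
  assumes sorted: "ranks_sorted F P"
    and j: "j < length P" and a: "a \<in> trig_output (P ! j)"
  shows "arank F P a \<le> rank_at F P j"
proof -
  have split: "take (Suc j) P = take j P @ [P ! j]"
    using j by (simp add: take_Suc_conv_app_nth)
  have "a \<in> fb F (take (Suc j) P)"
    using a unfolding split fb_snoc by blast
  then have "arank F P a = arank F (take (Suc j) P) a"
    using arank_append_stable[of a F "take (Suc j) P" "drop (Suc j) P"] by simp
  also have "\<dots> = arank F (take j P @ [P ! j]) a"
    using split by simp
  also have "\<dots> \<le> rank_at F P j"
  proof (cases "a \<in> fb F (take j P)")
    case True
    have "arank F (take j P) a = 0 \<or> (\<exists>i<j. arank F (take j P) a = rank_at F P i)"
      using arank_eq_0_or_rank_at[of F "take j P" a] j by (auto simp: rank_at_take)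
    then show ?thesis
      using True sorted j by (auto simp: arank_snoc ranks_sorted_def)
  qed (simp add: arank_snoc rank_at_def a)
  finally show ?thesis .
qed

section \<open>Trigger equivalence and chase derivations\<close>

definition trigger_equiv :: "chase_variant \<Rightarrow> ('p,'c,'v) trigger \<Rightarrow> ('p,'c,'v) trigger \<Rightarrow> bool" where
  "trigger_equiv X t1 t2 \<longleftrightarrow> fst t1 = fst t2 \<and>
     (if X = SO then \<forall>v\<in>frontier (fst t1). snd t1 v = snd t2 v else snd t1 = snd t2)"

lemma trigger_equiv_refl [simp]: "trigger_equiv X t t"
  by (simp add: trigger_equiv_def)

lemma trigger_equiv_sym: "trigger_equiv X t1 t2 \<Longrightarrow> trigger_equiv X t2 t1"
  by (auto simp: trigger_equiv_def split: if_splits)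

lemma trigger_equiv_trans: "trigger_equiv X t1 t2 \<Longrightarrow> trigger_equiv X t2 t3 \<Longrightarrow> trigger_equiv X t1 t3"
  by (auto simp: trigger_equiv_def split: if_splits)

lemma applicable_iff:
  "applicable X F Rs P t \<longleftrightarrow>
     fst t \<in> Rs \<and> hom_trigger (fb F P) t \<and> (\<nexists>t'. t' \<in> set P \<and> trigger_equiv X t' t)"
proof (cases X)
  case O
  then show ?thesis by (auto simp: applicable_def trigger_equiv_def prod_eq_iff)
next
  case SO
  have "(\<exists>t'. t' \<in> set P \<and> trigger_equiv X t' t) \<longleftrightarrow>
        (\<exists>\<pi>'. (fst t, \<pi>') \<in> set P \<and> (\<forall>v\<in>frontier (fst t). \<pi>' v = snd t v))"
  proof
    assume "\<exists>t'. t' \<in> set P \<and> trigger_equiv X t' t"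
    then obtain t' where "t' \<in> set P" "trigger_equiv X t' t" by blast
    then show "\<exists>\<pi>'. (fst t, \<pi>') \<in> set P \<and> (\<forall>v\<in>frontier (fst t). \<pi>' v = snd t v)"
      using SO by (intro exI[of _ "snd t'"]) (auto simp: trigger_equiv_def, metis prod.collapse)
  next
    assume "\<exists>\<pi>'. (fst t, \<pi>') \<in> set P \<and> (\<forall>v\<in>frontier (fst t). \<pi>' v = snd t v)"
    then obtain \<pi>' where "(fst t, \<pi>') \<in> set P" "\<forall>v\<in>frontier (fst t). \<pi>' v = snd t v" by blast
    then show "\<exists>t'. t' \<in> set P \<and> trigger_equiv X t' t"
      using SO by (intro exI[of _ "(fst t, \<pi>')"]) (simp add: trigger_equiv_def)
  qed
  moreover have "t \<in> set P \<Longrightarrow> \<exists>t'. t' \<in> set P \<and> trigger_equiv X t' t"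
    using trigger_equiv_refl by blast
  ultimately show ?thesis
    using SO unfolding applicable_def by blast
qed

lemma chase_derivation_append:
  "chase_derivation X F Rs (P @ M) \<longleftrightarrow>
     chase_derivation X F Rs P \<and> (\<forall>m<length M. applicable X F Rs (P @ take m M) (M ! m))"
proof
  assume PM: "chase_derivation X F Rs (P @ M)"
  have "applicable X F Rs (take i P) (P ! i)" if "i < length P" for i
    using PM[unfolded chase_derivation_def, rule_format, of i] that by (simp add: nth_append)
  moreover have "applicable X F Rs (P @ take m M) (M ! m)" if "m < length M" for m
    using PM[unfolded chase_derivation_def, rule_format, of "length P + m"] that by (simp add: nth_append)
  ultimately show "chase_derivation X F Rs P \<and> (\<forall>m<length M. applicable X F Rs (P @ take m M) (M ! m))"
    by (simp add: chase_derivation_def)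
next
  assume "chase_derivation X F Rs P \<and> (\<forall>m<length M. applicable X F Rs (P @ take m M) (M ! m))"
  then have P: "\<And>i. i < length P \<Longrightarrow> applicable X F Rs (take i P) (P ! i)"
    and M: "\<And>m. m < length M \<Longrightarrow> applicable X F Rs (P @ take m M) (M ! m)"
    by (auto simp: chase_derivation_def)
  show "chase_derivation X F Rs (P @ M)"
    unfolding chase_derivation_def
  proof (intro allI impI)
    fix i assume i: "i < length (P @ M)"
    show "applicable X F Rs (take i (P @ M)) ((P @ M) ! i)"
    proof (cases "i < length P")
      case False
      then obtain m where "i = length P + m" "m < length M"
        using i by (metis add_diff_inverse_nat add_less_cancel_left length_append)
      then show ?thesis using M by (simp add: nth_append)
    qed (simp add: P nth_append)
  qed
qed

lemma chase_derivation_snoc: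
  "chase_derivation X F Rs (P @ [t]) \<longleftrightarrow> chase_derivation X F Rs P \<and> applicable X F Rs P t"
  using chase_derivation_append[of X F Rs P "[t]"] by simp

lemma chase_derivation_Nil [simp]: "chase_derivation X F Rs []"
  by (simp add: chase_derivation_def)

lemma chase_derivation_prefix_applicable:
  "chase_derivation X F Rs P \<Longrightarrow> j < length P \<Longrightarrow> applicable X F Rs (take j P) (P ! j)"
  by (simp add: chase_derivation_def)

lemma chase_derivation_memD:
  assumes "chase_derivation X F Rs P" "w \<in> set P"
  shows "fst w \<in> Rs" "hom_trigger (fb F P) w"
proof -
  obtain j where "j < length P" "P ! j = w"
    using assms(2) by (metis in_set_conv_nth)
  then have "applicable X F Rs (take j P) w"
    using chase_derivation_prefix_applicable[OF assms(1)] by blast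
  then show "fst w \<in> Rs" "hom_trigger (fb F P) w"
    using fb_take_subset unfolding applicable_def hom_trigger_def by blast+
qed

lemma chase_derivation_not_equiv:
  assumes "chase_derivation X F Rs P" "i < j" "j < length P"
  shows "\<not> trigger_equiv X (P ! i) (P ! j)"
proof -
  have "P ! i \<in> set (take j P)"
    using assms(2,3) by (simp add: in_set_conv_nth) (metis nth_take)
  then show ?thesis
    using chase_derivation_prefix_applicable[OF assms(1,3)] unfolding applicable_iff by blast
qed

lemma chase_derivation_equiv_eq:
  assumes "chase_derivation X F Rs P" "w1 \<in> set P" "w2 \<in> set P" "trigger_equiv X w1 w2"
  shows "w1 = w2"
proof -
  obtain i j where "i < length P" "P ! i = w1" "j < length P" "P ! j = w2"
    using assms(2,3) by (metis in_set_conv_nth)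
  then show ?thesis
    using chase_derivation_not_equiv[OF assms(1)] assms(4) trigger_equiv_sym[OF assms(4)]
    by (cases i j rule: linorder_cases) auto
qed

lemma chase_derivation_distinct: "chase_derivation X F Rs P \<Longrightarrow> distinct P"
  using chase_derivation_not_equiv[of X F Rs P] trigger_equiv_refl
  unfolding distinct_conv_nth by (metis linorder_neqE_nat)

lemma terminating_iff:
  "terminating X F Rs P \<longleftrightarrow> chase_derivation X F Rs P \<and> (\<forall>t. \<not> applicable X F Rs P t)"
proof (intro iffI conjI allI notI; (elim conjE)?)
  fix t assume "terminating X F Rs P" and app: "applicable X F Rs P t"
  then have "exhaustive X F Rs P" and "applicable X F Rs (take (length P) P) t"
    by (simp_all add: terminating_def)
  then consider k where "length P \<le> k" "k < length P"
    | k where "length P \<le> k" "k \<le> length P" "\<not> applicable X F Rs (take k P) t"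
    unfolding exhaustive_def by blast
  then show False
  proof cases
    case (2 k)
    then have "k = length P" by simp
    with 2 app show False by simp
  qed simp
next
  assume "chase_derivation X F Rs P" "\<forall>t. \<not> applicable X F Rs P t"
  then show "terminating X F Rs P"
    unfolding terminating_def exhaustive_def by (auto intro!: exI[of _ "length P"])
qed (simp add: terminating_def)

section \<open>Renaming nulls along a map of triggers\<close>

definition terms_of :: "('p,'c,'v) atom set \<Rightarrow> ('p,'c,'v) trm set" where
  "terms_of G = (\<Union>a\<in>G. set (snd a))"

definition terms_nulls_from :: "('p,'c,'v) trigger set \<Rightarrow> ('p,'c,'v) trm set" where
  "terms_nulls_from W = {s. case s of Null R v \<pi> \<Rightarrow> (R, \<pi>) \<in> W | _ \<Rightarrow> True}"

lemma terms_of_mono: "A \<subseteq> B \<Longrightarrow> terms_of A \<subseteq> terms_of B"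
  by (auto simp: terms_of_def)

lemma ran_subset_terms_of_body_img:
  assumes "dom (snd t) = rvars (fst (fst t))"
  shows "ran (snd t) \<subseteq> terms_of (body_img t)"
proof
  fix s assume "s \<in> ran (snd t)"
  then obtain v where v: "snd t v = Some s"
    by (auto simp: ran_def)
  then obtain \<beta> where \<beta>: "\<beta> \<in> fst (fst t)" "RV v \<in> set (snd \<beta>)"
    using assms unfolding rvars_def by blast
  then have "s \<in> set (snd (app_atom (\<lambda>v. the (snd t v)) \<beta>))"
    using v by (force simp: app_atom_def)
  then show "s \<in> terms_of (body_img t)"
    using \<beta>(1) by (auto simp: terms_of_def body_img_def)
qed

lemma terms_of_body_img:
  assumes "dom (snd t) = rvars (fst (fst t))"
  shows "terms_of (body_img t) \<subseteq> range Cst \<union> ran (snd t)"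
proof
  fix s assume "s \<in> terms_of (body_img t)"
  then obtain \<beta> x where \<beta>: "\<beta> \<in> fst (fst t)" "x \<in> set (snd \<beta>)"
    and s: "s = app_term (\<lambda>v. the (snd t v)) x"
    by (auto simp: terms_of_def body_img_def app_atom_def)
  show "s \<in> range Cst \<union> ran (snd t)"
  proof (cases x)
    case (RV v)
    then have "v \<in> dom (snd t)"
      using \<beta> assms unfolding rvars_def by blast
    then show ?thesis
      using s RV by (auto simp: ran_def)
  qed (use s in simp)
qed

lemma terms_of_trig_output:
  "terms_of (trig_output t) \<subseteq> range Cst \<union> ran (snd t) \<union> range (\<lambda>v. Null (fst t) v (snd t))"
proof
  fix s assume "s \<in> terms_of (trig_output t)"
  then obtain a x where "s = app_term (pi_s (fst t) (snd t)) x"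
    by (auto simp: terms_of_def trig_output_def app_atom_def)
  then show "s \<in> range Cst \<union> ran (snd t) \<union> range (\<lambda>v. Null (fst t) v (snd t))"
    by (cases x) (auto simp: pi_s_def ran_def split: option.splits)
qed

lemma terms_nulls_from_simps [simp]:
  "Cst c \<in> terms_nulls_from W"
  "Var x \<in> terms_nulls_from W"
  "Null R v \<pi> \<in> terms_nulls_from W \<longleftrightarrow> (R, \<pi>) \<in> W"
  by (simp_all add: terms_nulls_from_def)

lemma terms_nulls_from_mono: "V \<subseteq> W \<Longrightarrow> terms_nulls_from V \<subseteq> terms_nulls_from W"
  by (auto simp: terms_nulls_from_def split: trm.splits)

lemma terms_of_fb_subset:
  fixes P :: "('p,'c,'v) trigger list"
  shows "chase_derivation X F Rs P \<Longrightarrow> terms_of (fb F P) \<subseteq> terms_nulls_from (set P)"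
proof (induction P rule: rev_induct)
  case Nil
  have "emb_term x \<in> terms_nulls_from W" for x W
    by (cases x) simp_all
  then show ?case
    by (auto simp: fb_Nil terms_of_def emb_atom_def)
next
  case (snoc t P)
  have "chase_derivation X F Rs P" and "applicable X F Rs P t"
    using snoc.prems unfolding chase_derivation_snoc by blast+
  then have IH: "terms_of (fb F P) \<subseteq> terms_nulls_from (set P)"
    and t: "hom_trigger (fb F P) t"
    using snoc.IH unfolding applicable_def by blast+
  have P: "terms_nulls_from (set P) \<subseteq> terms_nulls_from (set (P @ [t]))"
    by (rule terms_nulls_from_mono) auto
  have "ran (snd t) \<subseteq> terms_of (body_img t)"
    using t by (intro ran_subset_terms_of_body_img) (simp add: hom_trigger_def)
  also have "\<dots> \<subseteq> terms_of (fb F P)"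
    using t by (intro terms_of_mono) (simp add: hom_trigger_def)
  finally have "ran (snd t) \<subseteq> terms_nulls_from (set (P @ [t]))"
    using IH P by blast
  moreover have "Null (fst t) v (snd t) \<in> terms_nulls_from (set (P @ [t]))" for v
    by simp
  ultimately have "terms_of (trig_output t) \<subseteq> terms_nulls_from (set (P @ [t]))"
    using terms_of_trig_output[of t] by auto
  moreover have "terms_of (fb F (P @ [t])) = terms_of (fb F P) \<union> terms_of (trig_output t)"
    by (simp add: fb_snoc terms_of_def)
  ultimately show ?case
    using IH P by blast
qed

definition map_atom :: "(('p,'c,'v) trm \<Rightarrow> ('p,'c,'v) trm) \<Rightarrow> ('p,'c,'v) atom \<Rightarrow> ('p,'c,'v) atom" where
  "map_atom h a = (fst a, map h (snd a))"

definition map_trigger ::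
  "(('p,'c,'v) trm \<Rightarrow> ('p,'c,'v) trm) \<Rightarrow> ('p,'c,'v) trigger \<Rightarrow> ('p,'c,'v) trigger" where
  "map_trigger h t = (fst t, map_option h \<circ> snd t)"

text \<open>The null created by a trigger \<open>w\<close> is renamed into the null created by \<open>f w\<close>, so that
  \<open>f w\<close> produces exactly the renamed output of \<open>w\<close>.\<close>

definition rename_nulls ::
  "(('p,'c,'v) trigger \<Rightarrow> ('p,'c,'v) trigger) \<Rightarrow> ('p,'c,'v) trm \<Rightarrow> ('p,'c,'v) trm" where
  "rename_nulls f s = (case s of Null R v \<pi> \<Rightarrow> Null R v (snd (f (R, \<pi>))) | _ \<Rightarrow> s)"

lemma rename_nulls_simps [simp]:
  "rename_nulls f (Cst c) = Cst c"
  "rename_nulls f (Var v) = Var v"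
  "rename_nulls f (Null R v \<pi>) = Null R v (snd (f (R, \<pi>)))"
  by (simp_all add: rename_nulls_def)

lemma map_trigger_simps [simp]:
  "fst (map_trigger h t) = fst t"
  "snd (map_trigger h t) v = map_option h (snd t v)"
  by (simp_all add: map_trigger_def)

lemma dom_map_trigger [simp]: "dom (snd (map_trigger h t)) = dom (snd t)"
  by (auto simp: dom_def)

lemma map_trigger_inv_into:
  assumes "ran (snd t) \<subseteq> h ` T"
  shows "map_trigger h (map_trigger (inv_into T h) t) = t"
    and "ran (snd (map_trigger (inv_into T h) t)) \<subseteq> T"
proof -
  have "map_option h (map_option (inv_into T h) (snd t v)) = snd t v" for v
    using assms by (cases "snd t v") (auto simp: ran_def f_inv_into_f)
  then show "map_trigger h (map_trigger (inv_into T h) t) = t"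
    by (simp add: map_trigger_def comp_def)
  show "ran (snd (map_trigger (inv_into T h) t)) \<subseteq> T"
    using assms by (auto simp: ran_def inv_into_into)
qed

lemma map_atom_rename_nulls_emb_atom:
  fixes b :: "('p,'c,'v) ratom"
  shows "map_atom (rename_nulls f) (emb_atom b) = emb_atom b"
proof -
  have "rename_nulls f (emb_term x :: ('p,'c,'v) trm) = emb_term x" for x
    by (cases x) simp_all
  then show ?thesis
    by (simp add: map_atom_def emb_atom_def)
qed

lemma body_img_map_trigger:
  assumes "\<forall>c. h (Cst c) = Cst c" "dom (snd t) = rvars (fst (fst t))"
  shows "body_img (map_trigger h t) = map_atom h ` body_img t"
proof -
  have "app_term (\<lambda>v. the (map_option h (snd t v))) x = h (app_term (\<lambda>v. the (snd t v)) x)"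
    if "a \<in> fst (fst t)" "x \<in> set (snd a)" for a x
  proof (cases x)
    case (RV v)
    then have "v \<in> dom (snd t)"
      using that assms(2) unfolding rvars_def by blast
    then show ?thesis using RV by auto
  qed (simp add: assms(1))
  then show ?thesis
    by (auto simp: body_img_def app_atom_def map_atom_def image_image)
qed

lemma trig_output_rename_nulls:
  assumes equiv: "trigger_equiv X (f t) (map_trigger (rename_nulls f) t)"
    and dom_t: "dom (snd t) = rvars (fst (fst t))"
    and dom_ft: "dom (snd (f t)) = rvars (fst (fst t))"
  shows "trig_output (f t) = map_atom (rename_nulls f) ` trig_output t"
proof -
  have rule: "fst (f t) = fst t"
    using equiv by (simp add: trigger_equiv_def)
  have frontier: "snd (f t) v = map_option (rename_nulls f) (snd t v)" if "v \<in> frontier (fst t)" for v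
    using equiv that by (auto simp: trigger_equiv_def split: if_splits)
  have "app_term (pi_s (fst t) (snd (f t))) x = rename_nulls f (app_term (pi_s (fst t) (snd t)) x)"
    if "a \<in> snd (fst t)" "x \<in> set (snd a)" for a x
  proof (cases x)
    case (RV v)
    show ?thesis
    proof (cases "v \<in> rvars (fst (fst t))")
      case True
      then obtain s where s: "snd t v = Some s"
        using dom_t by blast
      have "v \<in> frontier (fst t)"
        using that RV True by (auto simp: frontier_def rvars_def)
      then show ?thesis
        using frontier s RV by (simp add: pi_s_def)
    next
      case False
      then have "snd t v = None" "snd (f t) v = None"
        using dom_t dom_ft by blast+
      then show ?thesis
        using RV by (simp add: pi_s_def)
    qed
  qed simp
  then show ?thesis
    using rule by (auto simp: trig_output_def app_atom_def map_atom_def image_image)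
qed

lemma inj_on_rename_nulls:
  assumes "\<forall>w\<in>W. fst (f w) = fst w" "inj_on f W"
  shows "inj_on (rename_nulls f) (terms_nulls_from W)"
proof (rule inj_onI)
  fix s1 s2 assume s: "s1 \<in> terms_nulls_from W" "s2 \<in> terms_nulls_from W"
    and eq: "rename_nulls f s1 = rename_nulls f s2"
  show "s1 = s2"
  proof (cases s1)
    case (Null R v \<pi>1)
    then obtain \<pi>2 where s2: "s2 = Null R v \<pi>2"
      using eq by (cases s2) auto
    have W: "(R, \<pi>1) \<in> W" "(R, \<pi>2) \<in> W"
      using s unfolding Null s2 by simp_all
    then have "f (R, \<pi>1) = f (R, \<pi>2)"
      using assms(1) eq Null s2 by (simp add: prod_eq_iff)
    then show ?thesis
      using inj_onD[OF assms(2) _ W] Null s2 by simp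
  qed (use eq in \<open>cases s2; auto\<close>)+
qed

lemma trigger_equiv_map_trigger:
  "trigger_equiv X t1 t2 \<Longrightarrow> trigger_equiv X (map_trigger h t1) (map_trigger h t2)"
  by (auto simp: trigger_equiv_def map_trigger_def split: if_splits)

lemma trigger_equiv_map_triggerD:
  assumes inj: "inj_on h T" and ran: "ran (snd t1) \<subseteq> T" "ran (snd t2) \<subseteq> T"
    and equiv: "trigger_equiv X (map_trigger h t1) (map_trigger h t2)"
  shows "trigger_equiv X t1 t2"
proof -
  have "snd t1 v = snd t2 v" if "map_option h (snd t1 v) = map_option h (snd t2 v)" for v
  proof (rule option.inj_map_strong[OF _ that])
    fix s1 s2 assume "s1 \<in> set_option (snd t1 v)" "s2 \<in> set_option (snd t2 v)" "h s1 = h s2"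
    moreover from this have "s1 \<in> ran (snd t1)" "s2 \<in> ran (snd t2)"
      by (auto simp: ran_def)
    ultimately show "s1 = s2"
      using inj ran by (meson inj_onD subsetD)
  qed
  then show ?thesis
    using equiv by (auto simp: trigger_equiv_def map_trigger_def fun_eq_iff split: if_splits)
qed

lemma map_atom_inj:
  assumes "inj_on h T" "set (snd a) \<subseteq> T" "set (snd b) \<subseteq> T" "map_atom h a = map_atom h b"
  shows "a = b"
proof (rule prod_eqI)
  have "inj_on h (set (snd a) \<union> set (snd b))"
    using assms(1-3) by (simp add: inj_on_subset)
  moreover have "map h (snd a) = map h (snd b)"
    using assms(4) by (simp add: map_atom_def)
  ultimately show "snd a = snd b"
    by (simp add: inj_on_map_eq_map)
  show "fst a = fst b"
    using assms(4) by (simp add: map_atom_def)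
qed

definition trigger_embedding :: "chase_variant \<Rightarrow> ('p,'c,'v) trigger list \<Rightarrow> ('p,'c,'v) trigger list
    \<Rightarrow> (('p,'c,'v) trigger \<Rightarrow> ('p,'c,'v) trigger) \<Rightarrow> bool" where
  "trigger_embedding X ds Q f \<longleftrightarrow> inj_on f (set Q) \<and>
     (\<forall>w\<in>set Q. f w \<in> set ds \<and> trigger_equiv X (f w) (map_trigger (rename_nulls f) w))"

lemma trigger_embedding_inj:
  assumes "trigger_embedding X ds Q f"
  shows "inj_on (rename_nulls f) (terms_nulls_from (set Q))"
  using assms by (intro inj_on_rename_nulls) (auto simp: trigger_embedding_def trigger_equiv_def)

lemma trigger_embedding_length_le:
  assumes "chase_derivation X F Rs Q" "trigger_embedding X ds Q f"
  shows "length Q \<le> length ds"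
proof -
  have "length Q = card (set Q)"
    using chase_derivation_distinct[OF assms(1)] by (simp add: distinct_card)
  also have "\<dots> \<le> card (set ds)"
    using assms(2) by (intro card_inj_on_le) (auto simp: trigger_embedding_def)
  also have "\<dots> \<le> length ds"
    by (rule card_length)
  finally show ?thesis .
qed

lemma trigger_embedding_trig_output:
  assumes "chase_derivation X F Rs ds" "chase_derivation X F Rs Q" "trigger_embedding X ds Q f"
    and "w \<in> set Q"
  shows "trig_output (f w) = map_atom (rename_nulls f) ` trig_output w"
proof (rule trig_output_rename_nulls)
  have "f w \<in> set ds" and "trigger_equiv X (f w) (map_trigger (rename_nulls f) w)"
    using assms(3,4) by (auto simp: trigger_embedding_def)
  then show "trigger_equiv X (f w) (map_trigger (rename_nulls f) w)"
    and "dom (snd (f w)) = rvars (fst (fst w))"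
    using chase_derivation_memD(2)[OF assms(1)] by (auto simp: hom_trigger_def trigger_equiv_def)
  show "dom (snd w) = rvars (fst (fst w))"
    using chase_derivation_memD(2)[OF assms(2,4)] by (simp add: hom_trigger_def)
qed

lemma trigger_embedding_fb:
  assumes "chase_derivation X F Rs ds" "chase_derivation X F Rs Q" "trigger_embedding X ds Q f"
  shows "map_atom (rename_nulls f) ` fb F Q \<subseteq> fb F ds"
proof
  fix x assume "x \<in> map_atom (rename_nulls f) ` fb F Q"
  then obtain a where a: "a \<in> fb F Q" "x = map_atom (rename_nulls f) a"
    by blast
  show "x \<in> fb F ds"
  proof (cases "a \<in> emb_atom ` F")
    case True
    then show ?thesis
      using a(2) by (auto simp: fb_def map_atom_rename_nulls_emb_atom)
  next
    case False
    then obtain w where w: "w \<in> set Q" "a \<in> trig_output w"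
      using a(1) by (auto simp: fb_def)
    then have "x \<in> trig_output (f w)"
      using trigger_embedding_trig_output[OF assms w(1)] a(2) by blast
    moreover have "f w \<in> set ds"
      using assms(3) w(1) by (simp add: trigger_embedding_def)
    ultimately show ?thesis
      by (auto simp: fb_def)
  qed
qed

section \<open>Breadth-first layers\<close>

lemma arank_new_layer:
  assumes "\<forall>u\<in>set M. body_img u \<subseteq> fb F Q \<and> trank F Q u = Suc k"
    and "A \<in> fb F (Q @ M) - fb F Q"
  shows "arank F (Q @ M) A = Suc k"
  using assms
proof (induction M rule: rev_induct)
  case (snoc u M)
  have "trank F (Q @ M) u = Suc k"
    using snoc.prems(1) trank_append_stable[of u F Q M] by simp
  moreover have "A \<in> fb F (Q @ M) \<or> A \<in> trig_output u"
    using snoc.prems(2) fb_snoc[of F "Q @ M" u] by auto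
  ultimately show ?case
    using snoc arank_snoc[of F "Q @ M" u A] by auto
qed simp

text \<open>Condition (2) of \<open>breadth_first\<close> is imposed on all triggers but the last one: the last
  layer is only known to be complete once nothing is applicable any more.\<close>

definition breadth_first_but_last :: "chase_variant \<Rightarrow> ('p,'c,'v) ratom set \<Rightarrow> ('p,'c,'v) rule set
    \<Rightarrow> ('p,'c,'v) trigger list \<Rightarrow> bool" where
  "breadth_first_but_last X F Rs P \<longleftrightarrow> ranks_sorted F P \<and>
     (\<forall>i. Suc i < length P \<longrightarrow> (\<forall>j. i < j \<and> j < length P \<longrightarrow> rank_at F P j \<noteq> rank_at F P i) \<longrightarrow>
        (\<forall>t. applicable X F Rs (take (Suc i) P) t \<longrightarrow>
           trank F (take (Suc i) P) t = Suc (rank_at F P i)))"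

lemma breadth_first_but_last_Nil: "breadth_first_but_last X F Rs []"
  by (simp add: breadth_first_but_last_def ranks_sorted_def)

lemma breadth_first_but_last_append:
  assumes bf: "breadth_first_but_last X F Rs Q"
    and last: "Q \<noteq> [] \<Longrightarrow> rank_at F Q (length Q - 1) = k"
    and next_rank: "\<And>t. applicable X F Rs Q t \<Longrightarrow> trank F Q t = Suc k"
    and layer_rank: "\<And>m. m < length L \<Longrightarrow> rank_at F (Q @ L) (length Q + m) = Suc k"
  shows "breadth_first_but_last X F Rs (Q @ L)"
proof -
  have old: "rank_at F (Q @ L) j = rank_at F Q j" if "j < length Q" for j
    using that by (rule rank_at_append)
  have new: "rank_at F (Q @ L) j = Suc k" if "length Q \<le> j" "j < length (Q @ L)" for j
    using layer_rank[of "j - length Q"] that by simp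
  have "rank_at F Q j \<le> k" if "j < length Q" for j
    using bf ranks_sorted_le_last[OF _ that] last that
    by (fastforce simp: breadth_first_but_last_def)
  then have "ranks_sorted F (Q @ L)"
    using bf layer_rank by (intro ranks_sorted_append_layer) (simp_all add: breadth_first_but_last_def)
  moreover have "trank F (take (Suc i) (Q @ L)) t = Suc (rank_at F (Q @ L) i)"
    if i: "Suc i < length (Q @ L)"
      and last_of_rank: "\<forall>j. i < j \<and> j < length (Q @ L) \<longrightarrow> rank_at F (Q @ L) j \<noteq> rank_at F (Q @ L) i"
      and t: "applicable X F Rs (take (Suc i) (Q @ L)) t" for i t
  proof -
    consider "Suc i < length Q" | "Suc i = length Q" | "length Q \<le> i"
      by linarith
    then show ?thesis
    proof cases
      case 1
      then have "\<forall>j. i < j \<and> j < length Q \<longrightarrow> rank_at F Q j \<noteq> rank_at F Q i"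
        using last_of_rank old by auto
      moreover have "applicable X F Rs (take (Suc i) Q) t"
        using t 1 by simp
      ultimately have "trank F (take (Suc i) Q) t = Suc (rank_at F Q i)"
        using bf 1 unfolding breadth_first_but_last_def by blast
      then show ?thesis
        using 1 old[of i] by simp
    next
      case 2
      then have "Q \<noteq> []" "i = length Q - 1"
        by auto
      then have "rank_at F (Q @ L) i = k"
        using last old[of i] 2 by simp
      moreover have "trank F Q t = Suc k"
        using t 2 next_rank by simp
      ultimately show ?thesis
        using 2 by simp
    next
      case 3
      then show ?thesis
        using last_of_rank new[of i] new[of "Suc i"] i by simp
    qed
  qed
  ultimately show ?thesis
    unfolding breadth_first_but_last_def by blast
qed

lemma breadth_first_if_terminal:
  assumes bf: "breadth_first_but_last X F Rs P" and terminal: "\<forall>t. \<not> applicable X F Rs P t"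
  shows "breadth_first X F Rs P"
  unfolding breadth_first_def
proof (intro conjI allI impI)
  fix i t assume i: "i < length P"
    and last_of_rank: "\<forall>j. i < j \<and> j < length P \<longrightarrow> trank F (take j P) (P ! j) \<noteq> trank F (take i P) (P ! i)"
    and t: "applicable X F Rs (take (Suc i) P) t"
  show "trank F (take (Suc i) P) t = Suc (trank F (take i P) (P ! i))"
  proof (cases "Suc i < length P")
    case True
    then show ?thesis
      using bf last_of_rank t unfolding breadth_first_but_last_def rank_at_def by blast
  next
    case False
    then have "take (Suc i) P = P"
      using i by simp
    then show ?thesis
      using t terminal by metis
  qed
qed (use bf in \<open>simp add: breadth_first_but_last_def ranks_sorted_def rank_at_def\<close>)

section \<open>Building a breadth-first derivation layer by layer\<close>

locale terminal_chase =
  fixes X :: chase_variant and F :: "('p,'c,'v) ratom set" and Rs :: "('p,'c,'v) rule set"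
    and ds :: "('p,'c,'v) trigger list"
  assumes existential_rules: "\<forall>R\<in>Rs. existential_rule R"
    and ds_derivation: "chase_derivation X F Rs ds"
    and ds_terminal: "\<not> applicable X F Rs ds t"
begin

lemma finite_body: "fst t \<in> Rs \<Longrightarrow> finite (fst (fst t))"
  using existential_rules by (simp add: existential_rule_def)

end

locale chase_stage = terminal_chase +
  fixes Q :: "('p,'c,'v) trigger list" and k :: nat
    and f :: "('p,'c,'v) trigger \<Rightarrow> ('p,'c,'v) trigger"
  assumes Q_derivation: "chase_derivation X F Rs Q"
    and Q_breadth_first: "breadth_first_but_last X F Rs Q"
    and last_rank: "Q \<noteq> [] \<Longrightarrow> rank_at F Q (length Q - 1) = k"
    and applicable_rank: "applicable X F Rs Q t \<Longrightarrow> trank F Q t = Suc k"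
    and saturated: "\<lbrakk>fst t \<in> Rs; hom_trigger (fb F Q) t; trank F Q t \<le> k\<rbrakk> \<Longrightarrow>
      \<exists>j<length Q. trigger_equiv X (Q ! j) t \<and> rank_at F Q j \<le> trank F Q t"
    and embedding: "trigger_embedding X ds Q f"
begin

lemma rank_at_le: "j < length Q \<Longrightarrow> rank_at F Q j \<le> k"
  using Q_breadth_first ranks_sorted_le_last last_rank by (fastforce simp: breadth_first_but_last_def)

lemma ran_subset_terms_nulls_from:
  "hom_trigger (fb F Q) t \<Longrightarrow> ran (snd t) \<subseteq> terms_nulls_from (set Q)"
  using ran_subset_terms_of_body_img terms_of_mono terms_of_fb_subset[OF Q_derivation]
  unfolding hom_trigger_def by blast

lemma trigger_equiv_map_trigger_iff:
  assumes "hom_trigger (fb F Q) t1" "hom_trigger (fb F Q) t2"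
  shows "trigger_equiv X (map_trigger (rename_nulls f) t1) (map_trigger (rename_nulls f) t2) \<longleftrightarrow>
    trigger_equiv X t1 t2"
  using trigger_equiv_map_triggerD[OF trigger_embedding_inj[OF embedding]]
    ran_subset_terms_nulls_from assms trigger_equiv_map_trigger by blast

lemma hom_trigger_map_trigger:
  assumes "hom_trigger (fb F Q) t"
  shows "hom_trigger (fb F ds) (map_trigger (rename_nulls f) t)"
proof -
  have "body_img (map_trigger (rename_nulls f) t) = map_atom (rename_nulls f) ` body_img t"
    using assms by (intro body_img_map_trigger) (simp_all add: hom_trigger_def)
  also have "\<dots> \<subseteq> fb F ds"
    using assms trigger_embedding_fb[OF ds_derivation Q_derivation embedding]
    unfolding hom_trigger_def by blast
  finally show ?thesis
    using assms by (simp add: hom_trigger_def)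
qed

text \<open>As \<open>ds\<close> is terminal, the choice is not vacuous for triggers applicable on \<open>Q\<close>.\<close>

definition ds_image :: "('p,'c,'v) trigger \<Rightarrow> ('p,'c,'v) trigger" where
  "ds_image t = (SOME t'. t' \<in> set ds \<and> trigger_equiv X t' (map_trigger (rename_nulls f) t))"

lemma ds_image:
  assumes "applicable X F Rs Q t"
  shows "ds_image t \<in> set ds" "trigger_equiv X (ds_image t) (map_trigger (rename_nulls f) t)"
proof -
  have "fst (map_trigger (rename_nulls f) t) \<in> Rs"
    and "hom_trigger (fb F ds) (map_trigger (rename_nulls f) t)"
    using assms hom_trigger_map_trigger by (simp_all add: applicable_def)
  then have "\<exists>t'. t' \<in> set ds \<and> trigger_equiv X t' (map_trigger (rename_nulls f) t)"
    using ds_terminal applicable_iff by blast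
  then show "ds_image t \<in> set ds" "trigger_equiv X (ds_image t) (map_trigger (rename_nulls f) t)"
    unfolding ds_image_def by (metis (mono_tags, lifting) someI_ex)+
qed

lemma ds_image_eq_iff:
  assumes "applicable X F Rs Q t1" "applicable X F Rs Q t2"
  shows "ds_image t1 = ds_image t2 \<longleftrightarrow> trigger_equiv X t1 t2"
proof
  assume "ds_image t1 = ds_image t2"
  then have "trigger_equiv X (map_trigger (rename_nulls f) t1) (map_trigger (rename_nulls f) t2)"
    using ds_image(2)[OF assms(1)] ds_image(2)[OF assms(2)] trigger_equiv_sym trigger_equiv_trans
    by metis
  then show "trigger_equiv X t1 t2"
    using assms trigger_equiv_map_trigger_iff unfolding applicable_def by blast
next
  assume "trigger_equiv X t1 t2"
  then have "trigger_equiv X (map_trigger (rename_nulls f) t1) (map_trigger (rename_nulls f) t2)"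
    by (rule trigger_equiv_map_trigger)
  then have "(\<lambda>t'. t' \<in> set ds \<and> trigger_equiv X t' (map_trigger (rename_nulls f) t1)) =
      (\<lambda>t'. t' \<in> set ds \<and> trigger_equiv X t' (map_trigger (rename_nulls f) t2))"
    using trigger_equiv_sym trigger_equiv_trans by blast
  then show "ds_image t1 = ds_image t2"
    unfolding ds_image_def by simp
qed

lemma ds_image_not_embedded:
  assumes "applicable X F Rs Q t" "w \<in> set Q"
  shows "f w \<noteq> ds_image t"
proof
  assume "f w = ds_image t"
  moreover have "trigger_equiv X (f w) (map_trigger (rename_nulls f) w)"
    using embedding assms(2) by (simp add: trigger_embedding_def)
  ultimately have "trigger_equiv X (map_trigger (rename_nulls f) w) (map_trigger (rename_nulls f) t)"
    using ds_image(2)[OF assms(1)] trigger_equiv_sym trigger_equiv_trans by metis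
  then have "trigger_equiv X w t"
    using assms chase_derivation_memD(2)[OF Q_derivation] trigger_equiv_map_trigger_iff
    unfolding applicable_def by blast
  then show False
    using assms unfolding applicable_iff by blast
qed

text \<open>\<open>Rs\<close> may be infinite: the layer is finite because \<open>ds_image\<close> maps the equivalence classes
  of applicable triggers injectively into \<open>set ds\<close>.\<close>

definition representative :: "('p,'c,'v) trigger \<Rightarrow> ('p,'c,'v) trigger" where
  "representative x = (SOME t. applicable X F Rs Q t \<and> ds_image t = x)"

definition representatives :: "('p,'c,'v) trigger set" where
  "representatives = representative ` ds_image ` {t. applicable X F Rs Q t}"

lemma representative:
  assumes "applicable X F Rs Q t"
  shows "applicable X F Rs Q (representative (ds_image t))"
    "ds_image (representative (ds_image t)) = ds_image t"
  using someI[of "\<lambda>r. applicable X F Rs Q r \<and> ds_image r = ds_image t", OF conjI[OF assms refl]]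
  unfolding representative_def by blast+

lemma representatives_applicable: "r \<in> representatives \<Longrightarrow> applicable X F Rs Q r"
  unfolding representatives_def using representative(1) by blast

lemma finite_representatives: "finite representatives"
proof -
  have "ds_image ` {t. applicable X F Rs Q t} \<subseteq> set ds"
    using ds_image(1) by blast
  then show ?thesis
    unfolding representatives_def using finite_subset by blast
qed

lemma representatives_cover:
  assumes "applicable X F Rs Q t"
  shows "\<exists>r\<in>representatives. trigger_equiv X r t"
proof
  show "representative (ds_image t) \<in> representatives"
    unfolding representatives_def using assms by blast
  show "trigger_equiv X (representative (ds_image t)) t"
    using representative[OF assms] ds_image_eq_iff assms by blast
qed

lemma inj_on_ds_image_representatives: "inj_on ds_image representatives"
proof (rule inj_onI)
  fix r1 r2 assume "r1 \<in> representatives" "r2 \<in> representatives" and eq: "ds_image r1 = ds_image r2"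
  then obtain t1 t2 where "applicable X F Rs Q t1" "r1 = representative (ds_image t1)"
    "applicable X F Rs Q t2" "r2 = representative (ds_image t2)"
    unfolding representatives_def by blast
  then show "r1 = r2"
    using representative(2) eq by metis
qed

lemma representatives_equiv_eq:
  assumes "r1 \<in> representatives" "r2 \<in> representatives" "trigger_equiv X r1 r2"
  shows "r1 = r2"
  using assms inj_on_ds_image_representatives ds_image_eq_iff representatives_applicable
  by (metis inj_onD)

definition next_layer :: "('p,'c,'v) trigger list" where
  "next_layer = (SOME L. set L = representatives \<and> distinct L)"

lemma set_next_layer: "set next_layer = representatives"
  and distinct_next_layer: "distinct next_layer"
  using someI_ex[OF finite_distinct_list[OF finite_representatives]]
  unfolding next_layer_def by blast+

definition next_embedding :: "('p,'c,'v) trigger \<Rightarrow> ('p,'c,'v) trigger" where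
  "next_embedding t = (if t \<in> representatives then ds_image t else f t)"

lemma next_layer_applicable: "u \<in> set next_layer \<Longrightarrow> applicable X F Rs Q u"
  using set_next_layer representatives_applicable by blast

lemma next_layer_trank:
  assumes "u \<in> set next_layer"
  shows "body_img u \<subseteq> fb F Q \<and> trank F Q u = Suc k"
proof -
  have "applicable X F Rs Q u"
    using assms by (rule next_layer_applicable)
  then show ?thesis
    using applicable_rank by (simp add: applicable_def hom_trigger_def)
qed

lemma next_derivation: "chase_derivation X F Rs (Q @ next_layer)"
  unfolding chase_derivation_append
proof (intro conjI Q_derivation allI impI)
  fix m assume m: "m < length next_layer"
  then have app: "applicable X F Rs Q (next_layer ! m)"
    using next_layer_applicable nth_mem by blast
  have "\<not> trigger_equiv X t' (next_layer ! m)" if t': "t' \<in> set (take m next_layer)" for t'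
  proof
    assume equiv: "trigger_equiv X t' (next_layer ! m)"
    obtain m' where m': "m' < m" "t' = next_layer ! m'"
      using t' m by (auto simp: in_set_conv_nth)
    then have "next_layer ! m' \<in> representatives" "next_layer ! m \<in> representatives"
      using m set_next_layer nth_mem by auto
    then have "next_layer ! m' = next_layer ! m"
      using equiv m'(2) representatives_equiv_eq by blast
    then show False
      using distinct_next_layer m m'(1) by (simp add: nth_eq_iff_index_eq)
  qed
  moreover have "fb F Q \<subseteq> fb F (Q @ take m next_layer)"
    by (rule fb_append_mono)
  ultimately show "applicable X F Rs (Q @ take m next_layer) (next_layer ! m)"
    using app unfolding applicable_iff hom_trigger_def by auto
qed

lemma arank_next_layer:
  "A \<in> fb F (Q @ next_layer) - fb F Q \<Longrightarrow> arank F (Q @ next_layer) A = Suc k"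
  by (rule arank_new_layer) (use next_layer_trank in auto)

lemma rank_at_next_layer:
  assumes "m < length next_layer"
  shows "rank_at F (Q @ next_layer) (length Q + m) = Suc k"
proof -
  have "body_img (next_layer ! m) \<subseteq> fb F Q" "trank F Q (next_layer ! m) = Suc k"
    using next_layer_trank assms nth_mem by blast+
  then show ?thesis
    using assms by (simp add: rank_at_append_length trank_append_stable)
qed

lemma rank_at_next_le:
  assumes "j < length (Q @ next_layer)"
  shows "rank_at F (Q @ next_layer) j \<le> Suc k"
proof (cases "j < length Q")
  case True
  then show ?thesis
    using rank_at_le[OF True] by (simp add: rank_at_append)
next
  case False
  then have "j = length Q + (j - length Q)" "j - length Q < length next_layer"
    using assms by auto
  then show ?thesis
    by (metis rank_at_next_layer order.refl)
qed

lemma arank_next_le: "arank F (Q @ next_layer) A \<le> Suc k"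
  using arank_eq_0_or_rank_at[of F "Q @ next_layer" A] rank_at_next_le by auto

lemma next_layer_nonempty: "applicable X F Rs Q t \<Longrightarrow> next_layer \<noteq> []"
  using representatives_cover set_next_layer by fastforce

lemma next_applicable_rank:
  assumes app: "applicable X F Rs (Q @ next_layer) t"
  shows "trank F (Q @ next_layer) t = Suc (Suc k)"
proof (rule trank_eq_Suc)
  have rule: "fst t \<in> Rs" and body: "body_img t \<subseteq> fb F (Q @ next_layer)"
    using app by (simp_all add: applicable_def hom_trigger_def)
  show "finite (fst (fst t))"
    using rule by (rule finite_body)
  show "\<forall>b\<in>body_img t. arank F (Q @ next_layer) b \<le> Suc k"
    using arank_next_le by blast
  have "\<not> body_img t \<subseteq> fb F Q"
  proof
    assume "body_img t \<subseteq> fb F Q"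
    then have "applicable X F Rs Q t"
      using app unfolding applicable_iff hom_trigger_def set_append by blast
    then obtain r where "r \<in> set next_layer" "trigger_equiv X r t"
      using representatives_cover set_next_layer by blast
    then show False
      using app unfolding applicable_iff set_append by blast
  qed
  then show "Suc k = 0 \<or> (\<exists>b\<in>body_img t. Suc k \<le> arank F (Q @ next_layer) b)"
    using arank_next_layer body by fastforce
qed

lemma next_saturated:
  assumes rule: "fst t \<in> Rs" and hom: "hom_trigger (fb F (Q @ next_layer)) t"
    and le: "trank F (Q @ next_layer) t \<le> Suc k"
  shows "\<exists>j<length (Q @ next_layer). trigger_equiv X ((Q @ next_layer) ! j) t \<and>
    rank_at F (Q @ next_layer) j \<le> trank F (Q @ next_layer) t"
proof -
  have "\<forall>b\<in>body_img t. arank F (Q @ next_layer) b \<le> k"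
    using le trank_le_Suc_iff[OF finite_body[OF rule]] by blast
  then have body: "body_img t \<subseteq> fb F Q"
    using hom arank_next_layer unfolding hom_trigger_def by fastforce
  then have trank_eq: "trank F (Q @ next_layer) t = trank F Q t"
    by (rule trank_append_stable)
  have homQ: "hom_trigger (fb F Q) t"
    using hom body by (simp add: hom_trigger_def)
  consider (low) "trank F Q t \<le> k"
    | (old) "trank F Q t = Suc k" "\<exists>w\<in>set Q. trigger_equiv X w t"
    | (new) "trank F Q t = Suc k" "applicable X F Rs Q t"
    using le trank_eq rule homQ unfolding applicable_iff by force
  then show ?thesis
  proof cases
    case low
    then obtain j where "j < length Q" "trigger_equiv X (Q ! j) t" "rank_at F Q j \<le> trank F Q t"
      using saturated rule homQ by blast
    then show ?thesis
      using trank_eq by (intro exI[of _ j]) (simp add: nth_append rank_at_append)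
  next
    case old
    then obtain j where "j < length Q" "trigger_equiv X (Q ! j) t"
      by (metis in_set_conv_nth)
    moreover have "rank_at F Q j \<le> k"
      using rank_at_le calculation(1) by blast
    ultimately show ?thesis
      using old trank_eq by (intro exI[of _ j]) (simp add: nth_append rank_at_append)
  next
    case new
    then obtain m where "m < length next_layer" "trigger_equiv X (next_layer ! m) t"
      using representatives_cover set_next_layer by (metis in_set_conv_nth)
    then show ?thesis
      using new trank_eq rank_at_next_layer
      by (intro exI[of _ "length Q + m"]) (simp add: nth_append)
  qed
qed

lemma representatives_not_in_Q: "r \<in> representatives \<Longrightarrow> r \<notin> set Q"
  using representatives_applicable by (auto simp: applicable_def)

lemma map_trigger_next_embedding:
  assumes "hom_trigger (fb F Q) t"
  shows "map_trigger (rename_nulls next_embedding) t = map_trigger (rename_nulls f) t"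
proof -
  have "rename_nulls next_embedding s = rename_nulls f s" if "s \<in> terms_nulls_from (set Q)" for s
    using that representatives_not_in_Q by (cases s) (auto simp: next_embedding_def)
  then have "map_option (rename_nulls next_embedding) (snd t v) = map_option (rename_nulls f) (snd t v)"
    for v
    using ran_subset_terms_nulls_from[OF assms] by (cases "snd t v") (auto simp: ran_def)
  then show ?thesis
    by (simp add: map_trigger_def comp_def)
qed

lemma inj_on_next_embedding: "inj_on next_embedding (set (Q @ next_layer))"
proof -
  have on_Q: "next_embedding w = f w" if "w \<in> set Q" for w
  proof -
    have "w \<notin> representatives"
      using that representatives_not_in_Q by blast
    then show ?thesis
      by (simp add: next_embedding_def)
  qed
  have on_reps: "next_embedding r = ds_image r" if "r \<in> representatives" for r
    using that by (simp add: next_embedding_def)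
  have "inj_on f (set Q)"
    using embedding by (simp add: trigger_embedding_def)
  then have inj_Q: "inj_on next_embedding (set Q)"
    using inj_on_cong[of "set Q" next_embedding f] on_Q by blast
  have inj_reps: "inj_on next_embedding representatives"
    using inj_on_ds_image_representatives inj_on_cong[of representatives next_embedding ds_image] on_reps
    by blast
  have "f w \<noteq> ds_image r" if "w \<in> set Q" "r \<in> representatives" for w r
    using ds_image_not_embedded[OF representatives_applicable[OF that(2)] that(1)] .
  then have "f ` set Q \<inter> ds_image ` representatives = {}"
    by blast
  moreover have "next_embedding ` set Q = f ` set Q"
    by (rule image_cong[OF refl on_Q])
  moreover have "next_embedding ` representatives = ds_image ` representatives"
    by (rule image_cong[OF refl on_reps])
  ultimately have "next_embedding ` set Q \<inter> next_embedding ` representatives = {}"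
    by simp
  then show ?thesis
    unfolding set_append set_next_layer inj_on_Un using inj_Q inj_reps by blast
qed

lemma next_trigger_embedding: "trigger_embedding X ds (Q @ next_layer) next_embedding"
  unfolding trigger_embedding_def
proof (intro conjI[OF inj_on_next_embedding] ballI)
  fix w assume w: "w \<in> set (Q @ next_layer)"
  show "next_embedding w \<in> set ds \<and>
      trigger_equiv X (next_embedding w) (map_trigger (rename_nulls next_embedding) w)"
  proof (cases "w \<in> representatives")
    case True
    then have app: "applicable X F Rs Q w"
      by (rule representatives_applicable)
    then have "hom_trigger (fb F Q) w"
      by (simp add: applicable_def)
    then show ?thesis
      using True ds_image[OF app] map_trigger_next_embedding by (simp add: next_embedding_def)
  next
    case False
    then have "w \<in> set Q"
      using w set_next_layer by auto
    then have "hom_trigger (fb F Q) w"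
      by (rule chase_derivation_memD(2)[OF Q_derivation])
    then show ?thesis
      using \<open>w \<in> set Q\<close> False embedding map_trigger_next_embedding
      by (simp add: trigger_embedding_def next_embedding_def)
  qed
qed

lemma next_stage:
  assumes "applicable X F Rs Q t"
  shows "chase_stage X F Rs ds (Q @ next_layer) (Suc k) next_embedding"
proof (intro chase_stage.intro chase_stage_axioms.intro)
  show "terminal_chase X F Rs ds"
    by (rule terminal_chase_axioms)
  show "chase_derivation X F Rs (Q @ next_layer)"
    by (rule next_derivation)
  show "breadth_first_but_last X F Rs (Q @ next_layer)"
    using breadth_first_but_last_append[OF Q_breadth_first last_rank applicable_rank rank_at_next_layer] .
  show "rank_at F (Q @ next_layer) (length (Q @ next_layer) - 1) = Suc k"
  proof -
    have "length (Q @ next_layer) - 1 = length Q + (length next_layer - 1)"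
      "length next_layer - 1 < length next_layer"
      using next_layer_nonempty[OF assms] by (cases next_layer; simp)+
    then show ?thesis
      using rank_at_next_layer by metis
  qed
  show "trank F (Q @ next_layer) t' = Suc (Suc k)" if "applicable X F Rs (Q @ next_layer) t'" for t'
    using that by (rule next_applicable_rank)
  show "\<exists>j<length (Q @ next_layer). trigger_equiv X ((Q @ next_layer) ! j) t' \<and>
      rank_at F (Q @ next_layer) j \<le> trank F (Q @ next_layer) t'"
    if "fst t' \<in> Rs" "hom_trigger (fb F (Q @ next_layer)) t'" "trank F (Q @ next_layer) t' \<le> Suc k"
    for t'
    using that by (rule next_saturated)
qed (rule next_trigger_embedding)

end

context terminal_chase
begin

lemma initial_stage: "chase_stage X F Rs ds [] 0 f"
proof (intro chase_stage.intro[OF terminal_chase_axioms] chase_stage_axioms.intro)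
  show "breadth_first_but_last X F Rs []"
    by (rule breadth_first_but_last_Nil)
  show "trank F [] t = Suc 0" for t
    by (simp add: trank_def arank_def image_constant_conv)
qed (simp_all add: trank_def trigger_embedding_def)

lemma terminal_stage_exists:
  obtains Q k f where "chase_stage X F Rs ds Q k f" "\<forall>t. \<not> applicable X F Rs Q t"
proof -
  have "\<exists>Q' k' f'. chase_stage X F Rs ds Q' k' f' \<and> (\<forall>t. \<not> applicable X F Rs Q' t)"
    if "chase_stage X F Rs ds Q k f" for Q k f
    using that
  proof (induction "length ds - length Q" arbitrary: Q k f rule: less_induct)
    case less
    show ?case
    proof (cases "\<exists>t. applicable X F Rs Q t")
      case True
      then obtain t where t: "applicable X F Rs Q t"
        by blast
      interpret chase_stage X F Rs ds Q k f
        by (rule less.prems)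
      have next_stage: "chase_stage X F Rs ds (Q @ next_layer) (Suc k) next_embedding"
        by (rule next_stage[OF t])
      have "length (Q @ next_layer) \<le> length ds"
        using trigger_embedding_length_le chase_stage.Q_derivation[OF next_stage]
          chase_stage.embedding[OF next_stage] by blast
      moreover have "length Q < length (Q @ next_layer)"
        using next_layer_nonempty[OF t] by simp
      ultimately have "length ds - length (Q @ next_layer) < length ds - length Q"
        by linarith
      then show ?thesis
        using less.hyps[OF _ next_stage] by blast
    qed (use less.prems in blast)
  qed
  then show ?thesis
    using initial_stage that by blast
qed

end

section \<open>Depth of the breadth-first derivation\<close>

lemma (in chase_stage) pullback_trigger:
  assumes rule: "fst t \<in> Rs" and dom: "dom (snd t) = rvars (fst (fst t))"
    and preimages: "\<And>b. b \<in> body_img t \<Longrightarrow>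
      \<exists>a\<in>fb F Q. map_atom (rename_nulls f) a = b \<and> arank F Q a \<le> arank F P b"
  obtains t' where "map_trigger (rename_nulls f) t' = t" "hom_trigger (fb F Q) t'"
    "trank F Q t' \<le> trank F P t"
proof -
  define T where "T = terms_nulls_from (set Q)"
  have inj: "inj_on (rename_nulls f) T"
    unfolding T_def using embedding by (rule trigger_embedding_inj)
  have fb_T: "set (snd a) \<subseteq> T" if "a \<in> fb F Q" for a
    using that terms_of_fb_subset[OF Q_derivation] unfolding T_def terms_of_def by blast
  have "ran (snd t) \<subseteq> rename_nulls f ` T"
  proof
    fix s assume "s \<in> ran (snd t)"
    then obtain b where b: "b \<in> body_img t" "s \<in> set (snd b)"
      using ran_subset_terms_of_body_img[OF dom] unfolding terms_of_def by blast
    then obtain a where a: "a \<in> fb F Q" "map_atom (rename_nulls f) a = b"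
      using preimages by blast
    then have "s \<in> rename_nulls f ` set (snd a)"
      using b(2) by (auto simp: map_atom_def)
    then show "s \<in> rename_nulls f ` T"
      using fb_T[OF a(1)] by blast
  qed
  define t' where "t' = map_trigger (inv_into T (rename_nulls f)) t"
  have t': "map_trigger (rename_nulls f) t' = t" and ran': "ran (snd t') \<subseteq> T"
    unfolding t'_def using map_trigger_inv_into[OF \<open>ran (snd t) \<subseteq> rename_nulls f ` T\<close>] by blast+
  have dom': "dom (snd t') = rvars (fst (fst t'))"
    using dom by (simp add: t'_def)
  have body: "body_img t = map_atom (rename_nulls f) ` body_img t'"
    using body_img_map_trigger[of "rename_nulls f", OF _ dom'] t' by simp
  have preimage: "a' \<in> fb F Q \<and> arank F Q a' \<le> arank F P (map_atom (rename_nulls f) a')"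
    if a': "a' \<in> body_img t'" for a'
  proof -
    obtain a where a: "a \<in> fb F Q" "map_atom (rename_nulls f) a = map_atom (rename_nulls f) a'"
      "arank F Q a \<le> arank F P (map_atom (rename_nulls f) a')"
      using preimages a' body by blast
    have "set (snd a') \<subseteq> terms_of (body_img t')"
      using a' by (auto simp: terms_of_def)
    also have "\<dots> \<subseteq> T"
      using terms_of_body_img[OF dom'] ran' by (auto simp: T_def)
    finally have "a = a'"
      using map_atom_inj[OF inj fb_T[OF a(1)]] a(2) by blast
    then show ?thesis
      using a by simp
  qed
  have "trank F Q t' \<le> trank F P t"
    using finite_body[OF rule] preimage body by (intro trank_le_trank) (auto simp: t'_def)
  moreover have "hom_trigger (fb F Q) t'"
    using dom' preimage by (auto simp: hom_trigger_def)
  ultimately show ?thesis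
    using that t' by blast
qed

locale terminal_stage = chase_stage +
  assumes Q_terminal: "\<not> applicable X F Rs Q t"
begin

lemma saturated_terminal:
  assumes "fst t \<in> Rs" "hom_trigger (fb F Q) t"
  shows "\<exists>j<length Q. trigger_equiv X (Q ! j) t \<and> rank_at F Q j \<le> trank F Q t"
proof (cases "trank F Q t \<le> k")
  case False
  obtain j where "j < length Q" "trigger_equiv X (Q ! j) t"
    using Q_terminal assms unfolding applicable_iff by (metis in_set_conv_nth)
  then show ?thesis
    using False rank_at_le by fastforce
qed (use assms saturated in blast)

lemma preimage_of_output:
  assumes t: "t \<in> set ds" "fst t \<in> Rs" "hom_trigger (fb F P) t"
    and preimages: "\<And>b. b \<in> body_img t \<Longrightarrow>
      \<exists>a\<in>fb F Q. map_atom (rename_nulls f) a = b \<and> arank F Q a \<le> arank F P b"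
    and c: "c \<in> trig_output t"
  shows "\<exists>a\<in>fb F Q. map_atom (rename_nulls f) a = c \<and> arank F Q a \<le> trank F P t"
proof -
  have "dom (snd t) = rvars (fst (fst t))"
    using t(3) by (simp add: hom_trigger_def)
  then obtain t' where t': "map_trigger (rename_nulls f) t' = t" "hom_trigger (fb F Q) t'"
    "trank F Q t' \<le> trank F P t"
    using pullback_trigger[OF t(2) _ preimages] by blast
  have "fst t' \<in> Rs"
    using t(2) t'(1) by auto
  then obtain j where j: "j < length Q" "trigger_equiv X (Q ! j) t'" "rank_at F Q j \<le> trank F Q t'"
    using saturated_terminal t'(2) by blast
  have "f (Q ! j) \<in> set ds" "trigger_equiv X (f (Q ! j)) (map_trigger (rename_nulls f) (Q ! j))"
    using embedding j(1) by (simp_all add: trigger_embedding_def)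
  moreover have "trigger_equiv X (map_trigger (rename_nulls f) (Q ! j)) t"
    using trigger_equiv_map_trigger[OF j(2), of "rename_nulls f"] t'(1) by simp
  ultimately have "f (Q ! j) = t"
    using chase_derivation_equiv_eq[OF ds_derivation _ t(1)] trigger_equiv_trans by blast
  then have "trig_output t = map_atom (rename_nulls f) ` trig_output (Q ! j)"
    using trigger_embedding_trig_output[OF ds_derivation Q_derivation embedding nth_mem[OF j(1)]]
    by simp
  then obtain a where a: "a \<in> trig_output (Q ! j)" "map_atom (rename_nulls f) a = c"
    using c by auto
  have "a \<in> fb F Q"
    using a(1) j(1) by (auto simp: fb_def)
  moreover have "arank F Q a \<le> rank_at F Q j"
    using arank_output_le_rank_at Q_breadth_first j(1) a(1)
    unfolding breadth_first_but_last_def by blast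
  ultimately show ?thesis
    using a(2) j(3) t'(3) by (intro bexI[of _ a]) auto
qed

lemma preimage_of_atom:
  assumes "i \<le> length ds" "c \<in> fb F (take i ds)"
  shows "\<exists>a\<in>fb F Q. map_atom (rename_nulls f) a = c \<and> arank F Q a \<le> arank F (take i ds) c"
  using assms
proof (induction i arbitrary: c)
  case 0
  then obtain b where "b \<in> F" "c = emb_atom b"
    by (auto simp: fb_Nil)
  moreover have "arank F Q c = 0"
    using arank_append_stable[of c F "[]" Q] arank_Nil 0 by (simp add: fb_Nil)
  ultimately show ?case
    by (intro bexI[of _ c]) (auto simp: fb_def map_atom_rename_nulls_emb_atom)
next
  case (Suc i)
  have i: "i < length ds"
    using Suc.prems(1) by simp
  have split: "take (Suc i) ds = take i ds @ [ds ! i]"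
    using i by (simp add: take_Suc_conv_app_nth)
  show ?case
  proof (cases "c \<in> fb F (take i ds)")
    case True
    then show ?thesis
      using Suc.IH[of c] i by (simp add: split arank_snoc)
  next
    case False
    then have c: "c \<in> trig_output (ds ! i)"
      using Suc.prems(2) unfolding split fb_snoc by blast
    have "applicable X F Rs (take i ds) (ds ! i)"
      using chase_derivation_prefix_applicable[OF ds_derivation i] .
    then have "fst (ds ! i) \<in> Rs" "hom_trigger (fb F (take i ds)) (ds ! i)"
      by (simp_all add: applicable_def)
    moreover have "\<exists>a\<in>fb F Q. map_atom (rename_nulls f) a = b \<and> arank F Q a \<le> arank F (take i ds) b"
      if "b \<in> body_img (ds ! i)" for b
    proof -
      have "b \<in> fb F (take i ds)"
        using that calculation(2) unfolding hom_trigger_def by blast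
      then show ?thesis
        using Suc.IH i by simp
    qed
    ultimately show ?thesis
      using preimage_of_output[OF nth_mem[OF i]] c False by (simp add: split arank_snoc)
  qed
qed

lemma depth_le: "depth F Q \<le> depth F ds"
  unfolding depth_def
proof (rule Max.boundedI)
  show "finite (insert 0 (arank F Q ` fb F Q))"
    using finite_arank_image by blast
  fix x assume "x \<in> insert 0 (arank F Q ` fb F Q)"
  then consider "x = 0" | a where "a \<in> fb F Q" "x = arank F Q a"
    by blast
  then show "x \<le> Max (insert 0 (arank F ds ` fb F ds))"
  proof cases
    case (2 a)
    define c where "c = map_atom (rename_nulls f) a"
    have "c \<in> fb F ds"
      using trigger_embedding_fb[OF ds_derivation Q_derivation embedding] 2(1) c_def by blast
    then obtain a' where a': "a' \<in> fb F Q" "map_atom (rename_nulls f) a' = c" "arank F Q a' \<le> arank F ds c"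
      using preimage_of_atom[of "length ds" c] by auto
    have "set (snd b) \<subseteq> terms_nulls_from (set Q)" if "b \<in> fb F Q" for b
      using that terms_of_fb_subset[OF Q_derivation] unfolding terms_of_def by blast
    then have "a' = a"
      using map_atom_inj[OF trigger_embedding_inj[OF embedding]] a'(1,2) 2(1) c_def by blast
    then have "x \<le> arank F ds c"
      using 2(2) a'(3) by simp
    also have "\<dots> \<le> Max (insert 0 (arank F ds ` fb F ds))"
      using \<open>c \<in> fb F ds\<close> finite_arank_image by (intro Max_ge) auto
    finally show ?thesis .
  qed simp
qed simp

end

theorem proposition1:
  fixes F :: "('p,'c,'v) ratom set" and Rs :: "('p,'c,'v) rule set"
    and X :: chase_variant and ds :: "('p,'c,'v) trigger list"
  assumes "\<forall>R\<in>Rs. existential_rule R"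
    and "terminating X F Rs ds"
  shows "\<exists>ds'. terminating X F Rs ds' \<and> breadth_first X F Rs ds' \<and> depth F ds' \<le> depth F ds"
proof -
  have "terminal_chase X F Rs ds"
    using assms unfolding terminal_chase_def terminating_iff by blast
  then interpret terminal_chase X F Rs ds .
  obtain Q k f where stage: "chase_stage X F Rs ds Q k f" and terminal: "\<forall>t. \<not> applicable X F Rs Q t"
    by (rule terminal_stage_exists)
  interpret terminal_stage X F Rs ds Q k f
    using stage terminal by (simp add: terminal_stage_def terminal_stage_axioms_def)
  have "terminating X F Rs Q"
    using Q_derivation terminal by (simp add: terminating_iff)
  moreover have "breadth_first X F Rs Q"
    using Q_breadth_first terminal by (rule breadth_first_if_terminal)
  ultimately show ?thesis
    using depth_le by blast
qed

end
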